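(* Let $X$ be a $p\times 1$ random vector with finite moments up to the fourth order and invertible covariance matrix $\Sigma$, let $X_1,\dots,X_n$ be independent samples of $X$, let $\Omega$ be the normalized inverse covariance matrix of $X$ with eigenvalues $\lambda_1,\dots,\lambda_p$, and let $\hat\Omega$ be the sample normalized inverse covariance matrix. Assume that all expectations involved exist and that $\mathrm{E}[\hat\Omega]=\Omega$. For $\rho\in\mathbb{R}$ put $\Omega^*=(1-\rho)\hat\Omega+\rho I_p$. Then the value $\rho^*$ of $\rho$ minimizing $\mathrm{E}\big[\|\Omega^*-\Omega\|_F^2\big]$ is \[ \rho^*=\frac{\mathrm{tr}(\Sigma_{\hat\Omega})}{\mathrm{tr}(\Sigma_{\hat\Omega})+\mathrm{tr}(\Omega^2)-p}=\frac{\mathrm{tr}(\Sigma_{\hat\Omega})}{\mathrm{tr}(\Sigma_{\hat\Omega})+\sum_{i=1}^p\lambda_i^2-p}, \] where $\Sigma_{\hat\Omega}$ is the $p^2\times p^2$ covariance matrix of $\mathrm{vec}(\hat\Omega)$.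
   Context: For a random vector $X$ with covariance $\Sigma$ (invertible), $P=\Sigma^{-1}$, $P_d$ is the diagonal matrix with the diagonal entries of $P$, and the normalized inverse covariance matrix is $\Omega=P_d^{-1/2}PP_d^{-1/2}$. Given samples $X_1,\dots,X_n$, $\hat\Sigma=\frac1n\sum_{i=1}^n(X_i-\bar X)(X_i-\bar X)^T$ (assumed nonsingular), $\hat P=\hat\Sigma^{-1}$, $\hat P_d$ its diagonal part, and $\hat\Omega=\hat P_d^{-1/2}\hat P\hat P_d^{-1/2}$. $\mathrm{vec}(A)$ stacks the columns of $A$ into one vector. For a $p\times p$ matrix $A$, $\|A\|_F^2=\mathrm{tr}(A^TA)/p$ (scaled squared Frobenius norm). *)

theory Defs
  imports "HOL-Analysis.Analysis" "HOL-Probability.Probability" "HOL-Computational_Algebra.Polynomial"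
begin

definition mean_vec :: "'a measure \<Rightarrow> ('a \<Rightarrow> real^'k) \<Rightarrow> real^'k" where
  "mean_vec M Y = (\<chi> i. integral\<^sup>L M (\<lambda>w. Y w $ i))"

definition cov_mat :: "'a measure \<Rightarrow> ('a \<Rightarrow> real^'k) \<Rightarrow> real^'k^'k" where
  "cov_mat M Y = (\<chi> i j. integral\<^sup>L M (\<lambda>w. (Y w $ i - mean_vec M Y $ i) * (Y w $ j - mean_vec M Y $ j)))"

definition outer :: "real^'p \<Rightarrow> real^'p \<Rightarrow> real^'p^'p" where
  "outer u v = (\<chi> i j. u $ i * v $ j)"

definition sample_mean :: "nat \<Rightarrow> (nat \<Rightarrow> 'a \<Rightarrow> real^'p) \<Rightarrow> 'a \<Rightarrow> real^'p" where
  "sample_mean n Xs w = (1 / real n) *\<^sub>R (\<Sum>i\<in>{1..n}. Xs i w)"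

definition sample_cov :: "nat \<Rightarrow> (nat \<Rightarrow> 'a \<Rightarrow> real^'p) \<Rightarrow> 'a \<Rightarrow> real^'p^'p" where
  "sample_cov n Xs w = (1 / real n) *\<^sub>R
     (\<Sum>i\<in>{1..n}. outer (Xs i w - sample_mean n Xs w) (Xs i w - sample_mean n Xs w))"

definition diag_inv_sqrt :: "real^'p^'p \<Rightarrow> real^'p^'p" where
  "diag_inv_sqrt P = (\<chi> i j. if i = j then 1 / sqrt (P $ i $ i) else 0)"

definition norm_inv_cov :: "real^'p^'p \<Rightarrow> real^'p^'p" where
  "norm_inv_cov S = (let P = matrix_inv S in diag_inv_sqrt P ** P ** diag_inv_sqrt P)"

text \<open>vec: column stacking; the index (j,i) stands for row i, column j.\<close>
definition vecm :: "real^'p^'p \<Rightarrow> real^('p \<times> 'p)" where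
  "vecm A = (\<chi> k. A $ snd k $ fst k)"

definition fro2 :: "real^'p^'p \<Rightarrow> real" where
  "fro2 A = trace (transpose A ** A) / real CARD('p)"

definition charpoly :: "real^'p^'p \<Rightarrow> real poly" where
  "charpoly A = det (\<chi> i j. (if i = j then [:0, 1:] else 0) - [: A $ i $ j :])"

end

(* Because the sample matrix \<Omega>' is unbiased, expanding the Frobenius norm entrywise kills the
   cross terms, and the risk of (1 - \<rho>) \<Omega>' + \<rho> I is the quadratic ((1 - \<rho>)^2 V + \<rho>^2 T) / p with
   V = tr(\<Sigma>_\<Omega>') and T = p ||I - \<Omega>||^2; it is minimised at \<rho> = V / (V + T), uniquely unless V = T = 0.
   Since \<Sigma> is symmetric, positive semidefinite and invertible, \<Sigma>^-1 has a positive diagonal, so \<Omega> is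
   symmetric with unit diagonal and T = tr(\<Omega>^2) - p. Finally tr(\<Omega>^2) = \<Sum> \<lambda>_i^2, because
   det(t^2 I - \<Omega>^2) = det(t I - \<Omega>) det(t I + \<Omega>) shows that the characteristic polynomial of \<Omega>^2 has
   the roots \<lambda>_i^2, and the subleading coefficient of a characteristic polynomial is minus the trace. *)

theory Submission
  imports Defs
begin

lemma matrix_inv_inverse:
  fixes S :: "'a::semiring_1^'n^'n"
  assumes "invertible S"
  shows "S ** matrix_inv S = mat 1" and "matrix_inv S ** S = mat 1"
  using someI_ex[OF assms[unfolded invertible_def]] by (simp_all add: matrix_inv_def)

lemma matrix_inv_entry_cramer:
  fixes S :: "'a::field^'n^'n"
  assumes "invertible S"
  shows "matrix_inv S $ i $ j = det (\<chi> k l. if l = i then axis j 1 $ k else S $ k $ l) / det S"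
proof -
  have "S *v (matrix_inv S *v axis j 1) = axis j 1"
    by (simp add: matrix_vector_mul_assoc matrix_inv_inverse assms)
  then have "matrix_inv S *v axis j 1 = (\<chi> i. det (\<chi> k l. if l = i then axis j 1 $ k else S $ k $ l) / det S)"
    using cramer assms invertible_det_nz by blast
  moreover have "(matrix_inv S *v axis j 1) $ i = matrix_inv S $ i $ j"
    by (simp add: matrix_vector_mult_def axis_def if_distrib cong: if_cong)
  ultimately show ?thesis by simp
qed

lemma symmetric_matrix_inv:
  fixes S :: "'a::comm_semiring_1^'n^'n"
  assumes "transpose S = S" and "invertible S"
  shows "transpose (matrix_inv S) = matrix_inv S"
proof -
  have "S ** transpose (matrix_inv S) = mat 1"
    using arg_cong[OF matrix_inv_inverse(2)[OF assms(2)], of transpose]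
    by (simp add: matrix_transpose_mul assms(1))
  then have "matrix_inv S ** (S ** transpose (matrix_inv S)) = matrix_inv S"
    by simp
  then show ?thesis
    by (simp add: matrix_mul_assoc matrix_inv_inverse assms(2))
qed

lemma inner_matrix_symmetric:
  fixes S :: "real^'n^'n"
  assumes "transpose S = S"
  shows "x \<bullet> (S *v y) = (S *v x) \<bullet> y"
  by (metis assms dot_lmul_matrix transpose_matrix_vector)

lemma matrix_inv_diagonal_pos:
  fixes S :: "real^'n^'n"
  assumes sym: "transpose S = S" and psd: "\<And>v. 0 \<le> v \<bullet> (S *v v)" and inv: "invertible S"
  shows "0 < matrix_inv S $ i $ i"
proof (rule ccontr)
  assume nonpos: "\<not> 0 < matrix_inv S $ i $ i"
  define e where "e = (axis i 1 :: real^'n)"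
  define u where "u = matrix_inv S *v e"
  define t where "t = 1 / (S $ i $ i + 1)"
  have Su: "S *v u = e"
    by (simp add: u_def matrix_vector_mul_assoc matrix_inv_inverse inv)
  have uSu: "u \<bullet> (S *v u) = matrix_inv S $ i $ i"
    unfolding Su by (simp add: e_def u_def inner_axis matrix_vector_mult_basis column_def)
  have uSe: "u \<bullet> (S *v e) = 1" and eSu: "e \<bullet> (S *v u) = 1"
    by (simp_all add: inner_matrix_symmetric[OF sym, of u] Su e_def)
  have eSe: "e \<bullet> (S *v e) = S $ i $ i"
    by (simp add: e_def inner_axis' matrix_vector_mult_basis column_def)
  have "0 \<le> S $ i $ i"
    using psd[of e] eSe by simp
  then have "0 < t" and "t * S $ i $ i < 1"
    by (simp_all add: t_def)
  have "(u - t *\<^sub>R e) \<bullet> (S *v (u - t *\<^sub>R e)) = matrix_inv S $ i $ i - 2 * t + t * (t * S $ i $ i)"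
    by (simp add: uSu uSe eSu eSe algebra_simps)
  also have "\<dots> < 0"
  proof -
    have "t * (t * S $ i $ i) < t * 1"
      using \<open>t * S $ i $ i < 1\<close> \<open>0 < t\<close> by (rule mult_strict_left_mono)
    then show ?thesis
      using nonpos \<open>0 < t\<close> by linarith
  qed
  finally show False
    using psd[of "u - t *\<^sub>R e"] by simp
qed

lemma matrix_diff_rdistrib:
  fixes A B :: "'a::ring_1^'n^'m" and C :: "'a^'k^'n"
  shows "(A - B) ** C = A ** C - B ** C"
  by (vector matrix_matrix_mult_def sum_subtractf left_diff_distrib)

lemma mat_matrix_mult: "mat t ** A = t *\<^sub>R A" and matrix_mult_mat: "A ** mat t = t *\<^sub>R A"
  for A :: "real^'n^'n"
  by (simp_all add: vec_eq_iff matrix_matrix_mult_def mat_def if_distrib if_distribR cong: if_cong)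

lemma mat_diff_mult_mat_add:
  fixes A :: "real^'n^'n"
  shows "(mat t - A) ** (mat t + A) = mat (t * t) - A ** A"
  by (simp add: matrix_diff_rdistrib matrix_add_ldistrib mat_matrix_mult matrix_mult_mat)
     (simp add: vec_eq_iff mat_def algebra_simps)

lemma det_uminus:
  fixes A :: "'a::comm_ring_1^'n^'n"
  shows "det (- A) = (-1) ^ CARD('n) * det A"
proof -
  have "- A = (\<chi> i. (-1) *s A $ i)"
    by (simp add: vec_eq_iff)
  then show ?thesis
    using det_rows_mul[of "\<lambda>_. -1" "\<lambda>i. A $ i"] by simp
qed

lemma poly_charpoly: "poly (charpoly A) t = det (mat t - A)"
  unfolding charpoly_def det_def poly_sum poly_mult poly_prod
  by (rule sum.cong) (auto simp: mat_def intro!: prod.cong)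

lemma coeff_prod_monic_linear:
  fixes a :: "'i \<Rightarrow> 'a::idom"
  assumes "finite S" "S \<noteq> {}"
  shows "coeff (\<Prod>i\<in>S. [:-a i, 1:]) (card S - 1) = - (\<Sum>i\<in>S. a i)"
  using assms
proof (induction S rule: finite_ne_induct)
  case (singleton x)
  then show ?case by simp
next
  case (insert x F)
  let ?q = "\<Prod>i\<in>F. [:-a i, 1:]"
  have "degree ?q = card F"
    by (simp add: degree_prod_eq_sum_degree)
  moreover have "lead_coeff ?q = 1"
    by (simp add: lead_coeff_prod)
  moreover obtain m where "card F = Suc m"
    using insert.hyps by (metis card_gt_0_iff gr0_implies_Suc)
  ultimately show ?case
    using insert by (simp add: coeff_pCons)
qed

lemma card_fixpoints_permutation:
  assumes "p permutes (UNIV :: 'n::finite set)" "p \<noteq> id"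
  shows "card {k. p k = k} + 2 \<le> CARD('n)"
proof -
  obtain i where i: "p i \<noteq> i"
    using assms(2) by (metis eq_id_iff)
  then have "p (p i) \<noteq> p i"
    using permutes_inj[OF assms(1)] by (metis injD)
  then have "{k. p k = k} \<inter> {i, p i} = {}"
    using i by auto
  then have "card ({k. p k = k} \<union> {i, p i}) = card {k. p k = k} + 2"
    using i by (simp add: card_Un_disjoint)
  moreover have "card ({k. p k = k} \<union> {i, p i}) \<le> CARD('n)"
    by (rule card_mono) auto
  ultimately show ?thesis by simp
qed

lemma coeff_charpoly_trace: "coeff (charpoly A) (CARD('n) - 1) = - trace A"
  for A :: "real^'n^'n"
proof -
  \<comment> \<open>In the Leibniz expansion only the identity permutation reaches degree n - 1: every other
      permutation moves at least two indices, and only fixed points contribute a factor of degree 1.\<close>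
  define C where "C = ((\<chi> i j. (if i = j then [:0, 1:] else 0) - [: A $ i $ j :]) :: real poly^'n^'n)"
  define summand where "summand p = of_int (sign p) * (\<Prod>i\<in>UNIV. C $ i $ p i)" for p
  have "charpoly A = summand id + (\<Sum>p \<in> {p. p permutes UNIV} - {id}. summand p)"
    unfolding charpoly_def det_def C_def summand_def
    by (subst sum.remove[of _ id]) (auto simp: finite_permutations)
  moreover have "summand id = (\<Prod>i\<in>UNIV. [:- A $ i $ i, 1:])"
    by (simp add: summand_def C_def)
  moreover have "coeff (summand p) (CARD('n) - 1) = 0" if "p permutes UNIV" "p \<noteq> id" for p
  proof -
    have "degree (summand p) \<le> degree (\<Prod>i\<in>UNIV. C $ i $ p i)"
      using degree_mult_le[of "of_int (sign p)"] by (simp add: summand_def)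
    also have "\<dots> \<le> (\<Sum>i\<in>UNIV. degree (C $ i $ p i))"
      using degree_prod_sum_le[of UNIV "\<lambda>i. C $ i $ p i"] by (simp add: o_def)
    also have "\<dots> = (\<Sum>i\<in>UNIV. if p i = i then 1 else 0)"
      by (rule sum.cong) (auto simp: C_def)
    also have "\<dots> = card {k. p k = k}"
      by (simp add: sum.If_cases)
    finally show ?thesis
      using card_fixpoints_permutation[OF that] by (simp add: coeff_eq_0)
  qed
  ultimately show ?thesis
    using coeff_prod_monic_linear[of "UNIV :: 'n set" "\<lambda>i. A $ i $ i"]
    by (simp add: coeff_sum trace_def)
qed

lemma poly_eqI_on_infinite:
  fixes p q :: "'a::idom poly"
  assumes "infinite S" and "\<And>x. x \<in> S \<Longrightarrow> poly p x = poly q x"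
  shows "p = q"
proof (rule ccontr)
  assume "p \<noteq> q"
  then have "finite {x. poly (p - q) x = 0}"
    by (intro poly_roots_finite) simp
  moreover have "S \<subseteq> {x. poly (p - q) x = 0}"
    using assms(2) by auto
  ultimately show False
    using assms(1) finite_subset by blast
qed

lemma charpoly_mult_self:
  fixes A :: "real^'n^'n" and lam :: "'n \<Rightarrow> real"
  assumes "charpoly A = (\<Prod>i\<in>UNIV. [:- lam i, 1:])"
  shows "charpoly (A ** A) = (\<Prod>i\<in>UNIV. [:- ((lam i)^2), 1:])"
proof (rule poly_eqI_on_infinite)
  \<comment> \<open>For s = t^2 the determinant det(s I - A^2) factors as det(t I - A) det(t I + A).\<close>
  show "infinite {0::real..}"
    by (rule infinite_Ici)
  fix s :: real
  assume "s \<in> {0..}"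
  then obtain t where s: "s = t * t"
    by (metis atLeast_iff real_sqrt_mult_self real_sqrt_pow2 power2_eq_square)
  have minus: "det (mat t - A) = (\<Prod>i\<in>UNIV. t - lam i)" for t
    using arg_cong[OF assms, of "\<lambda>q. poly q t"] by (simp add: poly_charpoly poly_prod)
  have "det (mat t + A) = det (- (mat (- t) - A))"
    by (rule arg_cong[where f = det]) (simp add: vec_eq_iff mat_def)
  also have "\<dots> = (- 1) ^ CARD('n) * (\<Prod>i\<in>UNIV. - t - lam i)"
    by (simp only: det_uminus minus)
  also have "\<dots> = (\<Prod>i::'n\<in>UNIV. - 1) * (\<Prod>i\<in>UNIV. - t - lam i)"
    by simp
  also have "\<dots> = (\<Prod>i\<in>UNIV. (- 1) * (- t - lam i))"
    by (rule prod.distrib[symmetric])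
  finally have plus: "det (mat t + A) = (\<Prod>i\<in>UNIV. t + lam i)"
    by (simp add: add.commute)
  have "poly (charpoly (A ** A)) s = det (mat t - A) * det (mat t + A)"
    by (simp add: poly_charpoly s det_mul mat_diff_mult_mat_add[symmetric])
  also have "\<dots> = (\<Prod>i\<in>UNIV. s - (lam i)^2)"
    unfolding minus plus prod.distrib[symmetric] by (simp add: s power2_eq_square algebra_simps)
  finally show "poly (charpoly (A ** A)) s = poly (\<Prod>i\<in>UNIV. [:- ((lam i)^2), 1:]) s"
    by (simp add: poly_prod)
qed

lemma trace_mult_self_eq_sum_eigenvalues_squared:
  fixes A :: "real^'n^'n" and lam :: "'n \<Rightarrow> real"
  assumes "charpoly A = (\<Prod>i\<in>UNIV. [:- lam i, 1:])"
  shows "trace (A ** A) = (\<Sum>i\<in>UNIV. (lam i)^2)"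
  using coeff_charpoly_trace[of "A ** A"] coeff_prod_monic_linear[of "UNIV :: 'n set" "\<lambda>i. (lam i)^2"]
  by (simp add: charpoly_mult_self[OF assms])

lemma norm_inv_cov_entry:
  "norm_inv_cov S $ i $ j
     = matrix_inv S $ i $ j / (sqrt (matrix_inv S $ i $ i) * sqrt (matrix_inv S $ j $ j))"
  unfolding norm_inv_cov_def Let_def diag_inv_sqrt_def matrix_matrix_mult_def
  by (simp add: if_distrib if_distribR cong: if_cong)

lemma symmetric_norm_inv_cov:
  assumes "transpose S = S" and "invertible S"
  shows "transpose (norm_inv_cov S) = norm_inv_cov S"
proof -
  have "matrix_inv S $ j $ i = matrix_inv S $ i $ j" for i j
    using arg_cong[OF symmetric_matrix_inv[OF assms], of "\<lambda>B. B $ i $ j"] by (simp add: transpose_def)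
  then show ?thesis
    by (simp add: vec_eq_iff transpose_def norm_inv_cov_entry mult.commute)
qed

lemma norm_inv_cov_diagonal:
  fixes S :: "real^'n^'n"
  assumes "transpose S = S" and "\<And>v. 0 \<le> v \<bullet> (S *v v)" and "invertible S"
  shows "norm_inv_cov S $ i $ i = 1"
  using matrix_inv_diagonal_pos[OF assms, of i] by (simp add: norm_inv_cov_entry)

lemma fro2_eq_sum_squares:
  "fro2 A = (\<Sum>i\<in>UNIV. \<Sum>k\<in>UNIV. (A $ k $ i)^2) / real CARD('n)" for A :: "real^'n^'n"
  unfolding fro2_def trace_def matrix_matrix_mult_def transpose_def by (simp add: power2_eq_square)

lemma fro2_nonneg: "0 \<le> fro2 A"
  by (simp add: fro2_eq_sum_squares sum_nonneg)

lemma fro2_mat_1_diff: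
  fixes A :: "real^'n^'n"
  assumes sym: "transpose A = A" and diag: "\<And>i. A $ i $ i = 1"
  shows "fro2 (mat 1 - A) = (trace (A ** A) - real CARD('n)) / real CARD('n)"
proof -
  have "A $ i $ k = A $ k $ i" for i k
    using arg_cong[OF sym, of "\<lambda>B. B $ k $ i"] by (simp add: transpose_def)
  then have "((mat 1 - A) $ k $ i)^2 = A $ i $ k * A $ k $ i - (if k = i then 1 else 0)" for i k
    using diag[of i] by (cases "k = i") (simp_all add: mat_def power2_eq_square)
  then show ?thesis
    by (simp add: fro2_eq_sum_squares sum_subtractf trace_def matrix_matrix_mult_def)
qed

lemma card_le_trace_mult_self:
  fixes A :: "real^'n^'n"
  assumes "transpose A = A" and "\<And>i. A $ i $ i = 1"
  shows "real CARD('n) \<le> trace (A ** A)"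
  using fro2_nonneg[of "mat 1 - A"] by (simp add: fro2_mat_1_diff[OF assms] zero_le_divide_iff)

lemma borel_measurable_det:
  fixes F :: "'a \<Rightarrow> real^'n^'n"
  assumes "\<And>i j. (\<lambda>w. F w $ i $ j) \<in> borel_measurable M"
  shows "(\<lambda>w. det (F w)) \<in> borel_measurable M"
  unfolding det_def using assms by measurable

lemma borel_measurable_matrix_inv_entry:
  fixes F :: "'a \<Rightarrow> real^'n^'n"
  assumes "\<And>i j. (\<lambda>w. F w $ i $ j) \<in> borel_measurable M"
    and "\<And>w. w \<in> space M \<Longrightarrow> invertible (F w)"
  shows "(\<lambda>w. matrix_inv (F w) $ i $ j) \<in> borel_measurable M"
proof -
  have "(\<lambda>w. det (\<chi> k l. if l = i then axis j 1 $ k else F w $ k $ l) / det (F w)) \<in> borel_measurable M"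
    using assms(1) by (intro borel_measurable_divide borel_measurable_det) auto
  then show ?thesis
    by (rule measurable_cong[THEN iffD1, rotated]) (simp add: matrix_inv_entry_cramer assms(2))
qed

lemma borel_measurable_norm_inv_cov_entry:
  fixes F :: "'a \<Rightarrow> real^'n^'n"
  assumes "\<And>i j. (\<lambda>w. F w $ i $ j) \<in> borel_measurable M"
    and "\<And>w. w \<in> space M \<Longrightarrow> invertible (F w)"
  shows "(\<lambda>w. norm_inv_cov (F w) $ i $ j) \<in> borel_measurable M"
  unfolding norm_inv_cov_entry
  using borel_measurable_matrix_inv_entry[OF assms] by measurable

lemma borel_measurable_sample_cov_entry:
  assumes "\<And>k. k \<in> {1..n} \<Longrightarrow> Xs k \<in> borel_measurable M"
  shows "(\<lambda>w. sample_cov n Xs w $ i $ j) \<in> borel_measurable M"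
proof -
  have "(\<lambda>w. Xs k w $ i) \<in> borel_measurable M" if "k \<in> {1..n}" for k i
    using measurable_compose[OF assms[OF that] borel_measurable_nth] .
  then show ?thesis
    unfolding sample_cov_def sample_mean_def outer_def by simp
qed

lemma integrable_mult_of_square_integrable:
  fixes f g :: "'a \<Rightarrow> real"
  assumes "f \<in> borel_measurable M" "g \<in> borel_measurable M"
    and "integrable M (\<lambda>x. (f x)^2)" "integrable M (\<lambda>x. (g x)^2)"
  shows "integrable M (\<lambda>x. f x * g x)"
proof (rule Bochner_Integration.integrable_bound)
  show "integrable M (\<lambda>x. (f x)^2 + (g x)^2)"
    using assms(3,4) by simp
  show "(\<lambda>x. f x * g x) \<in> borel_measurable M"
    using assms(1,2) by simp
  have "\<bar>a * b\<bar> \<le> a^2 + b^2" for a b :: real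
  proof -
    have "2 * \<bar>a\<bar> * \<bar>b\<bar> \<le> \<bar>a\<bar>^2 + \<bar>b\<bar>^2"
      by (rule sum_squares_bound)
    then show ?thesis
      unfolding abs_mult power2_abs using zero_le_power2[of a] zero_le_power2[of b] by linarith
  qed
  then show "AE x in M. norm (f x * g x) \<le> norm ((f x)^2 + (g x)^2)"
    by simp
qed

lemma (in finite_measure) square_integrable_of_power4_integrable:
  fixes f :: "'a \<Rightarrow> real"
  assumes "f \<in> borel_measurable M" and "integrable M (\<lambda>x. (f x)^4)"
  shows "integrable M (\<lambda>x. (f x)^2)"
  by (rule square_integrable_imp_integrable) (use assms in simp_all)

lemma cov_mat_symmetric: "transpose (cov_mat M X) = cov_mat M X"
  by (simp add: vec_eq_iff transpose_def cov_mat_def mult.commute)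

lemma (in prob_space) cov_mat_psd:
  fixes X :: "'a \<Rightarrow> real^'n"
  assumes "X \<in> borel_measurable M" and "\<And>i. integrable M (\<lambda>w. (X w $ i)^2)"
  shows "0 \<le> v \<bullet> (cov_mat M X *v v)"
proof -
  define Y where "Y i w = X w $ i - mean_vec M X $ i" for i w
  have meas: "(\<lambda>w. Y i w) \<in> borel_measurable M" for i
    unfolding Y_def using measurable_compose[OF assms(1) borel_measurable_nth] by simp
  have "integrable M (\<lambda>w. (Y i w)^2)" for i
    unfolding Y_def power2_diff
    using assms square_integrable_imp_integrable[OF measurable_compose[OF assms(1) borel_measurable_nth] assms(2)]
    by (intro Bochner_Integration.integrable_diff Bochner_Integration.integrable_add) auto
  then have integrable_YY: "integrable M (\<lambda>w. Y i w * Y j w)" for i j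
    by (intro integrable_mult_of_square_integrable meas)
  have "v \<bullet> (cov_mat M X *v v) = (\<Sum>i\<in>UNIV. \<Sum>j\<in>UNIV. expectation (\<lambda>w. v $ i * v $ j * (Y i w * Y j w)))"
    by (simp add: inner_vec_def matrix_vector_mult_def cov_mat_def Y_def sum_distrib_left ac_simps)
  also have "\<dots> = expectation (\<lambda>w. (\<Sum>i\<in>UNIV. v $ i * Y i w)^2)"
    using integrable_YY
    by (simp add: power2_eq_square sum_product ac_simps Bochner_Integration.integral_sum)
  also have "\<dots> \<ge> 0"
    by simp
  finally show ?thesis .
qed

lemma (in prob_space) trace_cov_mat_vecm:
  fixes F :: "'a \<Rightarrow> real^'n^'n"
  shows "trace (cov_mat M (\<lambda>w. vecm (F w))) = (\<Sum>i\<in>UNIV. \<Sum>k\<in>UNIV. variance (\<lambda>w. F w $ k $ i))"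
proof -
  have "trace (cov_mat M (\<lambda>w. vecm (F w))) = (\<Sum>q\<in>UNIV \<times> UNIV. variance (\<lambda>w. F w $ snd q $ fst q))"
    by (simp add: trace_def cov_mat_def mean_vec_def vecm_def power2_eq_square)
  then show ?thesis
    by (simp add: sum.cartesian_product case_prod_beta)
qed

lemma (in prob_space)
  fixes f :: "'a \<Rightarrow> real"
  assumes "f \<in> borel_measurable M" and "integrable M (\<lambda>w. (f w)^2)"
  shows integrable_square_affine_centered:
      "integrable M (\<lambda>w. (a * (f w - expectation f) + c)^2)"
    and expectation_square_affine_centered:
      "expectation (\<lambda>w. (a * (f w - expectation f) + c)^2) = a^2 * variance f + c^2"
proof -
  have f: "integrable M f"
    using square_integrable_imp_integrable[OF assms] .
  have sq: "integrable M (\<lambda>w. (f w - expectation f)^2)"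
    unfolding power2_diff using f assms(2)
    by (intro Bochner_Integration.integrable_diff Bochner_Integration.integrable_add) auto
  have expand: "(a * (f w - expectation f) + c)^2
      = a^2 * (f w - expectation f)^2 + 2 * a * c * (f w - expectation f) + c^2" for w
    by (simp add: power2_eq_square algebra_simps)
  show "integrable M (\<lambda>w. (a * (f w - expectation f) + c)^2)"
    unfolding expand using f sq by simp
  have "expectation (\<lambda>w. f w - expectation f) = 0"
    using f by (simp add: prob_space)
  then show "expectation (\<lambda>w. (a * (f w - expectation f) + c)^2) = a^2 * variance f + c^2"
    unfolding expand using f sq by (simp add: prob_space)
qed

lemma (in prob_space) expectation_fro2_shrinkage:
  fixes F :: "'a \<Rightarrow> real^'n^'n"
  assumes meas: "\<And>i j. (\<lambda>w. F w $ i $ j) \<in> borel_measurable M"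
    and sq: "\<And>i j. integrable M (\<lambda>w. (F w $ i $ j)^2)"
    and mean: "\<And>i j. expectation (\<lambda>w. F w $ i $ j) = Om $ i $ j"
  shows "expectation (\<lambda>w. fro2 ((1 - \<rho>) *\<^sub>R F w + \<rho> *\<^sub>R B - Om))
    = (1 - \<rho>)^2 * trace (cov_mat M (\<lambda>w. vecm (F w))) / real CARD('n) + \<rho>^2 * fro2 (B - Om)"
proof -
  define e where "e i k w = (1 - \<rho>) * (F w $ k $ i - expectation (\<lambda>w. F w $ k $ i)) + \<rho> * (B - Om) $ k $ i"
    for i k w
  have "((1 - \<rho>) *\<^sub>R F w + \<rho> *\<^sub>R B - Om) $ k $ i = e i k w" for i k w
    by (simp add: e_def mean algebra_simps)
  then have "expectation (\<lambda>w. fro2 ((1 - \<rho>) *\<^sub>R F w + \<rho> *\<^sub>R B - Om))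
      = (\<Sum>i\<in>UNIV. \<Sum>k\<in>UNIV. expectation (\<lambda>w. (e i k w)^2)) / real CARD('n)"
    using integrable_square_affine_centered[OF meas sq]
    by (simp add: fro2_eq_sum_squares e_def Bochner_Integration.integral_sum)
  also have "\<dots> = (\<Sum>i\<in>UNIV. \<Sum>k\<in>UNIV. (1 - \<rho>)^2 * variance (\<lambda>w. F w $ k $ i) + \<rho>^2 * ((B - Om) $ k $ i)^2)
      / real CARD('n)"
    by (simp add: e_def expectation_square_affine_centered[OF meas sq] power_mult_distrib)
  finally show ?thesis
    by (simp add: trace_cov_mat_vecm fro2_eq_sum_squares sum.distrib sum_distrib_left add_divide_distrib)
qed

lemma shrinkage_weight_argmin:
  fixes V T x :: real
  assumes "0 \<le> V" and "0 \<le> T"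
  shows "(1 - V / (V + T))^2 * V + (V / (V + T))^2 * T \<le> (1 - x)^2 * V + x^2 * T"
    and "V + T \<noteq> 0 \<Longrightarrow> (1 - x)^2 * V + x^2 * T = (1 - V / (V + T))^2 * V + (V / (V + T))^2 * T
      \<Longrightarrow> x = V / (V + T)"
proof -
  let ?x0 = "V / (V + T)"
  have scaled: "(V + T) * ((1 - y)^2 * V + y^2 * T) = ((V + T) * y - V)^2 + V * T" for y
    by (simp add: power2_eq_square algebra_simps)
  have at_min: "(V + T) * ?x0 = V"
    using assms by (cases "V + T = 0") auto
  have "(V + T) * ((1 - ?x0)^2 * V + ?x0^2 * T) \<le> (V + T) * ((1 - x)^2 * V + x^2 * T)"
    unfolding scaled at_min by simp
  then show "(1 - ?x0)^2 * V + ?x0^2 * T \<le> (1 - x)^2 * V + x^2 * T"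
    using assms by (cases "V + T = 0") (auto simp: add_nonneg_eq_0_iff)
  show "x = ?x0" if "V + T \<noteq> 0" and "(1 - x)^2 * V + x^2 * T = (1 - ?x0)^2 * V + ?x0^2 * T"
  proof -
    have "((V + T) * x - V)^2 = 0"
      using arg_cong[OF that(2), of "(*) (V + T)"] unfolding scaled at_min by simp
    then show ?thesis
      using that(1) by (simp add: eq_divide_eq mult.commute)
  qed
qed

theorem theorem2:
  fixes M :: "'a measure" and X :: "'a \<Rightarrow> real^'p" and Xs :: "nat \<Rightarrow> 'a \<Rightarrow> real^'p"
    and n :: nat and lam :: "'p \<Rightarrow> real"
  assumes "prob_space M"
    and "X \<in> borel_measurable M"
    and "\<forall>i. integrable M (\<lambda>w. (X w $ i) ^ 4)"
    and "invertible (cov_mat M X)"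
    and "\<forall>k\<in>{1..n}. Xs k \<in> borel_measurable M \<and> distr M borel (Xs k) = distr M borel X"
    and "prob_space.indep_vars M (\<lambda>_. borel) Xs {1..n}"
    and "\<forall>w\<in>space M. invertible (sample_cov n Xs w)"
    and "\<forall>j k. integrable M (\<lambda>w. (norm_inv_cov (sample_cov n Xs w) $ j $ k) ^ 2)"
    and "\<forall>j k. integral\<^sup>L M (\<lambda>w. norm_inv_cov (sample_cov n Xs w) $ j $ k)
               = norm_inv_cov (cov_mat M X) $ j $ k"
    and "charpoly (norm_inv_cov (cov_mat M X)) = (\<Prod>i\<in>UNIV. [: - lam i, 1 :])"
  shows "(\<forall>\<rho>::real.
            integral\<^sup>L M (\<lambda>w. fro2 ((1 - trace (cov_mat M (\<lambda>w. vecm (norm_inv_cov (sample_cov n Xs w))))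
                 / (trace (cov_mat M (\<lambda>w. vecm (norm_inv_cov (sample_cov n Xs w))))
                    + trace (norm_inv_cov (cov_mat M X) ** norm_inv_cov (cov_mat M X)) - real CARD('p)))
                 *\<^sub>R norm_inv_cov (sample_cov n Xs w)
               + (trace (cov_mat M (\<lambda>w. vecm (norm_inv_cov (sample_cov n Xs w))))
                 / (trace (cov_mat M (\<lambda>w. vecm (norm_inv_cov (sample_cov n Xs w))))
                    + trace (norm_inv_cov (cov_mat M X) ** norm_inv_cov (cov_mat M X)) - real CARD('p)))
                 *\<^sub>R mat 1
               - norm_inv_cov (cov_mat M X)))
            \<le> integral\<^sup>L M (\<lambda>w. fro2 ((1 - \<rho>) *\<^sub>R norm_inv_cov (sample_cov n Xs w) + \<rho> *\<^sub>R mat 1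
                                     - norm_inv_cov (cov_mat M X))))
         \<and> (trace (cov_mat M (\<lambda>w. vecm (norm_inv_cov (sample_cov n Xs w))))
              + trace (norm_inv_cov (cov_mat M X) ** norm_inv_cov (cov_mat M X)) - real CARD('p) \<noteq> 0
            \<longrightarrow> (\<forall>\<rho>::real.
                 integral\<^sup>L M (\<lambda>w. fro2 ((1 - \<rho>) *\<^sub>R norm_inv_cov (sample_cov n Xs w) + \<rho> *\<^sub>R mat 1
                                     - norm_inv_cov (cov_mat M X)))
                 = integral\<^sup>L M (\<lambda>w. fro2 ((1 - trace (cov_mat M (\<lambda>w. vecm (norm_inv_cov (sample_cov n Xs w))))
                 / (trace (cov_mat M (\<lambda>w. vecm (norm_inv_cov (sample_cov n Xs w))))
                    + trace (norm_inv_cov (cov_mat M X) ** norm_inv_cov (cov_mat M X)) - real CARD('p)))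
                 *\<^sub>R norm_inv_cov (sample_cov n Xs w)
               + (trace (cov_mat M (\<lambda>w. vecm (norm_inv_cov (sample_cov n Xs w))))
                 / (trace (cov_mat M (\<lambda>w. vecm (norm_inv_cov (sample_cov n Xs w))))
                    + trace (norm_inv_cov (cov_mat M X) ** norm_inv_cov (cov_mat M X)) - real CARD('p)))
                 *\<^sub>R mat 1
               - norm_inv_cov (cov_mat M X)))
                 \<longrightarrow> \<rho> = trace (cov_mat M (\<lambda>w. vecm (norm_inv_cov (sample_cov n Xs w))))
                 / (trace (cov_mat M (\<lambda>w. vecm (norm_inv_cov (sample_cov n Xs w))))
                    + trace (norm_inv_cov (cov_mat M X) ** norm_inv_cov (cov_mat M X)) - real CARD('p))))
         \<and> trace (cov_mat M (\<lambda>w. vecm (norm_inv_cov (sample_cov n Xs w))))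
             / (trace (cov_mat M (\<lambda>w. vecm (norm_inv_cov (sample_cov n Xs w))))
                + trace (norm_inv_cov (cov_mat M X) ** norm_inv_cov (cov_mat M X)) - real CARD('p))
           = trace (cov_mat M (\<lambda>w. vecm (norm_inv_cov (sample_cov n Xs w))))
             / (trace (cov_mat M (\<lambda>w. vecm (norm_inv_cov (sample_cov n Xs w))))
                + (\<Sum>i\<in>UNIV. (lam i)^2) - real CARD('p))"
proof -
  interpret prob_space M by fact
  define F where "F w = norm_inv_cov (sample_cov n Xs w)" for w
  define Om where "Om = norm_inv_cov (cov_mat M X)"
  define V where "V = trace (cov_mat M (\<lambda>w. vecm (F w)))"
  define T where "T = trace (Om ** Om) - real CARD('p)"
  have X_sq: "integrable M (\<lambda>w. (X w $ i)^2)" for i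
    using measurable_compose[OF assms(2) borel_measurable_nth] assms(3)
    by (intro square_integrable_of_power4_integrable) auto
  have Om_sym: "transpose Om = Om"
    unfolding Om_def using cov_mat_symmetric assms(4) by (rule symmetric_norm_inv_cov)
  have Om_diag: "Om $ i $ i = 1" for i
    unfolding Om_def using cov_mat_symmetric cov_mat_psd[OF assms(2) X_sq] assms(4)
    by (rule norm_inv_cov_diagonal)
  have F_meas: "(\<lambda>w. F w $ i $ j) \<in> borel_measurable M" for i j
    unfolding F_def using assms(5,7)
    by (intro borel_measurable_norm_inv_cov_entry borel_measurable_sample_cov_entry) auto
  have F_sq: "integrable M (\<lambda>w. (F w $ i $ j)^2)" for i j
    using assms(8) by (simp add: F_def)
  have F_mean: "expectation (\<lambda>w. F w $ i $ j) = Om $ i $ j" for i j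
    using assms(9) by (simp add: F_def Om_def)
  have risk: "expectation (\<lambda>w. fro2 ((1 - \<rho>) *\<^sub>R F w + \<rho> *\<^sub>R mat 1 - Om))
      = ((1 - \<rho>)^2 * V + \<rho>^2 * T) / real CARD('p)" for \<rho>
    using expectation_fro2_shrinkage[OF F_meas F_sq F_mean, of \<rho> "mat 1"]
    unfolding fro2_mat_1_diff[OF Om_sym Om_diag] V_def[symmetric] T_def[symmetric]
    by (simp add: add_divide_distrib)
  have V_nonneg: "0 \<le> V"
    by (simp add: V_def trace_cov_mat_vecm sum_nonneg)
  have T_nonneg: "0 \<le> T"
    using card_le_trace_mult_self[OF Om_sym Om_diag] by (simp add: T_def)
  have trace_Om: "V + trace (Om ** Om) - real CARD('p) = V + T"
    by (simp add: T_def)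
  have eigenvalues_Om: "V + (\<Sum>i\<in>UNIV. (lam i)^2) - real CARD('p) = V + T"
    using trace_mult_self_eq_sum_eigenvalues_squared[OF assms(10)] by (simp add: T_def Om_def)
  show ?thesis
    unfolding F_def[symmetric] Om_def[symmetric] V_def[symmetric] trace_Om eigenvalues_Om risk
    using shrinkage_weight_argmin[OF V_nonneg T_nonneg] by (auto intro: divide_right_mono)
qed

end
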